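(* Let $m,n$ be positive integers. The chromatic polynomial of a biclique $A(\mathcal{F})$ with $|C|=n$ and $\mathcal{F}=(F_1,\ldots,F_m)$ is determined by $n$ and the numbers $\left|\bigcap_{i\in I}F_i\right|$ for the nonempty subsets $I\subseteq\{1,\ldots,m\}$. That is, if $\mathcal{F}=(F_1,\ldots,F_m)$ is a family of subsets of an $n$-set $C$ and $\mathcal{F}'=(F'_1,\ldots,F'_m)$ is a family of subsets of an $n$-set $C'$ such that $\left|\bigcap_{i\in I}F_i\right|=\left|\bigcap_{i\in I}F'_i\right|$ for every nonempty $I\subseteq\{1,\ldots,m\}$, then $A(\mathcal{F})$ and $A(\mathcal{F}')$ have the same chromatic polynomial.
   Context: Given an $n$-element set $C$ and a sequence $\mathcal{F}=(F_1,\ldots,F_m)$ of subsets of $C$, the biclique $A(\mathcal{F})$ is the simple graph with vertex set $C\cup D$, where $D=\{w_1,\ldots,w_m\}$ is disjoint from $C$, in which $C$ and $D$ each induce complete graphs and, for each $i$, the neighbours of $w_i$ in $C$ are exactly the vertices of $F_i$. The chromatic polynomial $P_G(q)$ of a graph $G$ is the polynomial whose value at each positive integer $q$ is the number of proper colourings of $G$ with $q$ colours. *)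

theory Defs
  imports Main "HOL-Library.FuncSet" "HOL-Computational_Algebra.Polynomial"
begin

text \<open>A finite simple graph is given by a vertex set V and a symmetric irreflexive
adjacency relation E (only pairs of vertices in V matter).\<close>

definition proper_colourings :: "'v set \<Rightarrow> ('v \<Rightarrow> 'v \<Rightarrow> bool) \<Rightarrow> nat \<Rightarrow> ('v \<Rightarrow> nat) set" where
  "proper_colourings V E q =
     {c \<in> V \<rightarrow>\<^sub>E {0..<q}. \<forall>u\<in>V. \<forall>v\<in>V. E u v \<longrightarrow> c u \<noteq> c v}"

definition num_colourings :: "'v set \<Rightarrow> ('v \<Rightarrow> 'v \<Rightarrow> bool) \<Rightarrow> nat \<Rightarrow> nat" where
  "num_colourings V E q = card (proper_colourings V E q)"

definition chromatic_polynomial :: "'v set \<Rightarrow> ('v \<Rightarrow> 'v \<Rightarrow> bool) \<Rightarrow> int poly" where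
  "chromatic_polynomial V E =
     (THE p. \<forall>q::nat. q > 0 \<longrightarrow> poly p (int q) = int (num_colourings V E q))"

text \<open>The biclique A(F) for C and F = (F_1,...,F_m): vertices Inl x for x in C and
Inr i (= w_i) for i in {1..m}.\<close>
definition biclique_vertices :: "'a set \<Rightarrow> nat \<Rightarrow> ('a + nat) set" where
  "biclique_vertices C m = Inl ` C \<union> Inr ` {1..m}"

fun biclique_adj :: "'a set \<Rightarrow> nat \<Rightarrow> (nat \<Rightarrow> 'a set) \<Rightarrow> ('a + nat) \<Rightarrow> ('a + nat) \<Rightarrow> bool" where
  "biclique_adj C m F (Inl x) (Inl y) = (x \<noteq> y \<and> x \<in> C \<and> y \<in> C)"
| "biclique_adj C m F (Inr i) (Inr j) = (i \<noteq> j \<and> i \<in> {1..m} \<and> j \<in> {1..m})"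
| "biclique_adj C m F (Inl x) (Inr i) = (i \<in> {1..m} \<and> x \<in> F i)"
| "biclique_adj C m F (Inr i) (Inl x) = (i \<in> {1..m} \<and> x \<in> F i)"

definition biclique_chrom_poly :: "'a set \<Rightarrow> nat \<Rightarrow> (nat \<Rightarrow> 'a set) \<Rightarrow> int poly" where
  "biclique_chrom_poly C m F =
     chromatic_polynomial (biclique_vertices C m) (biclique_adj C m F)"

end

theory Submission
  imports Defs
begin

text \<open>Label each x \<in> C by the set of indices i with x \<in> F i. For a nonempty T the number of
  x whose label contains T is the given quantity card (\<Inter>i\<in>T. F i), and for T = {} it is n; by
  inclusion-exclusion over the supersets of T these numbers determine how many x carry each
  label exactly. Hence there is a bijection C \<rightarrow> C' preserving labels, which extends to an
  isomorphism A(F) \<cong> A(F'), and isomorphic graphs have the same chromatic polynomial.\<close>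

lemma num_colourings_le_if_surj_hom:
  assumes "finite V" and "\<sigma> ` V = V'"
    and hom: "\<forall>u\<in>V. \<forall>v\<in>V. E u v \<longrightarrow> E' (\<sigma> u) (\<sigma> v)"
  shows "num_colourings V' E' q \<le> num_colourings V E q"
proof -
  define pull where "pull c' = restrict (c' \<circ> \<sigma>) V" for c' :: "'b \<Rightarrow> nat"
  have "finite (proper_colourings V E q)"
    unfolding proper_colourings_def
    by (rule finite_subset[of _ "V \<rightarrow>\<^sub>E {0..<q}"]) (auto intro: finite_PiE \<open>finite V\<close>)
  moreover have "pull ` proper_colourings V' E' q \<subseteq> proper_colourings V E q"
    using \<open>\<sigma> ` V = V'\<close> hom unfolding pull_def proper_colourings_def
    by (auto simp: PiE_def Pi_def)
  moreover have "inj_on pull (proper_colourings V' E' q)"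
  proof (rule inj_onI)
    fix c1 c2
    assume "c1 \<in> proper_colourings V' E' q" "c2 \<in> proper_colourings V' E' q"
      and eq: "pull c1 = pull c2"
    then have "c1 \<in> extensional V'" "c2 \<in> extensional V'"
      unfolding proper_colourings_def by (auto simp: PiE_def)
    moreover have "c1 (\<sigma> x) = c2 (\<sigma> x)" if "x \<in> V" for x
      using fun_cong[OF eq, of x] that by (simp add: pull_def)
    ultimately show "c1 = c2"
      using \<open>\<sigma> ` V = V'\<close> by (auto intro: extensionalityI)
  qed
  ultimately show ?thesis
    unfolding num_colourings_def by (meson card_inj_on_le)
qed

lemma num_colourings_eq_if_iso:
  assumes "finite V" and bij: "bij_betw \<sigma> V V'"
    and iso: "\<forall>u\<in>V. \<forall>v\<in>V. E u v = E' (\<sigma> u) (\<sigma> v)"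
  shows "num_colourings V' E' q = num_colourings V E q"
proof (rule antisym)
  show "num_colourings V' E' q \<le> num_colourings V E q"
    using assms by (intro num_colourings_le_if_surj_hom) (auto simp: bij_betw_def)
  define \<tau> where "\<tau> = inv_into V \<sigma>"
  have \<tau>: "bij_betw \<tau> V' V"
    unfolding \<tau>_def by (rule bij_betw_inv_into[OF bij])
  have "\<forall>u\<in>V'. \<forall>v\<in>V'. E' u v \<longrightarrow> E (\<tau> u) (\<tau> v)"
  proof (intro ballI impI)
    fix u v assume "u \<in> V'" "v \<in> V'" "E' u v"
    moreover have "\<sigma> (\<tau> w) = w" if "w \<in> V'" for w
      using bij that unfolding \<tau>_def by (rule bij_betw_inv_into_right)
    moreover have "\<tau> u \<in> V" "\<tau> v \<in> V"
      using \<tau> \<open>u \<in> V'\<close> \<open>v \<in> V'\<close> by (auto dest: bij_betw_apply)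
    ultimately show "E (\<tau> u) (\<tau> v)"
      using iso by metis
  qed
  then show "num_colourings V E q \<le> num_colourings V' E' q"
    using \<tau> bij_betw_finite[OF bij] \<open>finite V\<close>
    by (intro num_colourings_le_if_surj_hom) (auto simp: bij_betw_def)
qed

lemma card_supsets_eq_sum_card_fibres:
  assumes "finite C" "finite K" "\<forall>x\<in>C. P x \<subseteq> K"
  shows "card {x\<in>C. T \<subseteq> P x} = (\<Sum>S | S \<subseteq> K \<and> T \<subseteq> S. card {x\<in>C. P x = S})"
proof -
  have "{x\<in>C. T \<subseteq> P x} = (\<Union>S\<in>{S. S \<subseteq> K \<and> T \<subseteq> S}. {x\<in>C. P x = S})"
    using assms(3) by auto
  moreover have "finite {S. S \<subseteq> K \<and> T \<subseteq> S}"
    using assms(2) by simp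
  ultimately show ?thesis
    using assms(1) by (auto intro: card_UN_disjoint)
qed

lemma card_fibres_eq_if_card_supsets_eq:
  assumes "finite C" "finite C'" "finite K"
    and "\<forall>x\<in>C. P x \<subseteq> K" "\<forall>x\<in>C'. P' x \<subseteq> K"
    and supsets: "\<And>T. T \<subseteq> K \<Longrightarrow> card {x\<in>C. T \<subseteq> P x} = card {x\<in>C'. T \<subseteq> P' x}"
  shows "card {x\<in>C. P x = S} = card {x\<in>C'. P' x = S}"
proof (cases "S \<subseteq> K")
  case False
  then have "{x\<in>C. P x = S} = {}" "{x\<in>C'. P' x = S} = {}"
    using assms(4,5) by auto
  then show ?thesis by (simp only: card.empty)
next
  case True
  then show ?thesis
  proof (induction "card (K - S)" arbitrary: S rule: less_induct)
    case (less S)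
    let ?U = "{S'. S' \<subseteq> K \<and> S \<subset> S'}"
    have upper: "{S'. S' \<subseteq> K \<and> S \<subseteq> S'} = insert S ?U" and "S \<notin> ?U"
      using less.prems by auto
    have "finite ?U" using \<open>finite K\<close> by simp
    have IH: "(\<Sum>S'\<in>?U. card {x\<in>C. P x = S'}) = (\<Sum>S'\<in>?U. card {x\<in>C'. P' x = S'})"
    proof (rule sum.cong[OF refl])
      fix S' assume "S' \<in> ?U"
      then have "card (K - S') < card (K - S)"
        using less.prems \<open>finite K\<close> by (intro psubset_card_mono) auto
      then show "card {x\<in>C. P x = S'} = card {x\<in>C'. P' x = S'}"
        using less.hyps \<open>S' \<in> ?U\<close> by blast
    qed
    have "card {x\<in>C. S \<subseteq> P x} = card {x\<in>C'. S \<subseteq> P' x}"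
      using supsets less.prems .
    then show ?case
      using IH \<open>finite ?U\<close> \<open>S \<notin> ?U\<close>
      unfolding card_supsets_eq_sum_card_fibres[OF assms(1,3,4)]
        card_supsets_eq_sum_card_fibres[OF assms(2,3,5)] upper
      by simp
  qed
qed

lemma bij_betw_preserving_if_card_fibres_eq:
  assumes "finite C" "finite C'"
    and fibres: "\<And>S. card {x\<in>C. P x = S} = card {x\<in>C'. P' x = S}"
  obtains h where "bij_betw h C C'" and "\<forall>x\<in>C. P' (h x) = P x"
proof -
  have "\<forall>S. \<exists>f. bij_betw f {x\<in>C. P x = S} {x\<in>C'. P' x = S}"
    using assms by (auto intro: finite_same_card_bij)
  from choice[OF this] obtain b
    where b: "\<And>S. bij_betw (b S) {x\<in>C. P x = S} {x\<in>C'. P' x = S}"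
    by blast
  define h where "h x = b (P x) x" for x
  have h: "h x \<in> C' \<and> P' (h x) = P x" if "x \<in> C" for x
    using bij_betwE[OF b[of "P x"]] that unfolding h_def by blast
  have "inj_on h C"
  proof (rule inj_onI)
    fix x y assume "x \<in> C" "y \<in> C" "h x = h y"
    moreover from this have "P x = P y"
      using h[of x] h[of y] by simp
    ultimately show "x = y"
      using bij_betw_imp_inj_on[OF b[of "P x"]] unfolding h_def by (auto dest: inj_onD)
  qed
  moreover have "C' \<subseteq> h ` C"
  proof
    fix y assume "y \<in> C'"
    then obtain x where "x \<in> C" "P x = P' y" "y = b (P' y) x"
      using bij_betw_imp_surj_on[OF b[of "P' y"]] by force
    then have "y = h x"
      unfolding h_def by simp
    with \<open>x \<in> C\<close> show "y \<in> h ` C" by blast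
  qed
  ultimately have "bij_betw h C C'"
    using h by (auto simp: bij_betw_def)
  with h show thesis using that by blast
qed

lemma biclique_chrom_poly_eq_if_bij:
  assumes "finite C" and h: "bij_betw h C C'"
    and mem: "\<And>x i. x \<in> C \<Longrightarrow> i \<in> {1..m} \<Longrightarrow> h x \<in> F' i \<longleftrightarrow> x \<in> F i"
  shows "biclique_chrom_poly C m F = biclique_chrom_poly C' m F'"
proof -
  let ?V = "biclique_vertices C m" and ?V' = "biclique_vertices C' m"
  let ?\<sigma> = "map_sum h id"
  have inj: "inj_on h C" and onto: "h ` C = C'"
    using h by (auto simp: bij_betw_def)
  have "inj_on ?\<sigma> ?V"
  proof (rule inj_onI)
    fix u v assume "u \<in> ?V" "v \<in> ?V" "?\<sigma> u = ?\<sigma> v"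
    then show "u = v"
      using inj by (cases u; cases v) (auto simp: biclique_vertices_def dest: inj_onD)
  qed
  moreover have "?\<sigma> ` ?V = ?V'"
    unfolding biclique_vertices_def onto[symmetric] by (simp add: image_Un image_image)
  ultimately have bij: "bij_betw ?\<sigma> ?V ?V'"
    by (simp add: bij_betw_def)
  have iso: "\<forall>u\<in>?V. \<forall>v\<in>?V. biclique_adj C m F u v = biclique_adj C' m F' (?\<sigma> u) (?\<sigma> v)"
  proof (intro ballI)
    fix u v assume "u \<in> ?V" "v \<in> ?V"
    then show "biclique_adj C m F u v = biclique_adj C' m F' (?\<sigma> u) (?\<sigma> v)"
    proof (cases u; cases v)
      fix x y assume "u = Inl x" "v = Inl y"
      with \<open>u \<in> ?V\<close> \<open>v \<in> ?V\<close> have "x \<in> C" "y \<in> C"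
        by (auto simp: biclique_vertices_def)
      then show ?thesis
        using \<open>u = Inl x\<close> \<open>v = Inl y\<close> inj onto by (auto simp: inj_on_eq_iff)
    qed (use \<open>u \<in> ?V\<close> \<open>v \<in> ?V\<close> mem in \<open>auto simp: biclique_vertices_def\<close>)
  qed
  have "finite ?V"
    using \<open>finite C\<close> by (simp add: biclique_vertices_def)
  from num_colourings_eq_if_iso[OF this bij iso]
  show ?thesis
    unfolding biclique_chrom_poly_def chromatic_polynomial_def by simp
qed

definition membership :: "nat set \<Rightarrow> (nat \<Rightarrow> 'a set) \<Rightarrow> 'a \<Rightarrow> nat set" where
  "membership I F x = {i\<in>I. x \<in> F i}"

lemma membership_supset_eq_Inter:
  assumes "T \<subseteq> I" "T \<noteq> {}" "\<forall>i\<in>I. F i \<subseteq> C"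
  shows "{x\<in>C. T \<subseteq> membership I F x} = (\<Inter>i\<in>T. F i)"
  using assms unfolding membership_def by blast

theorem proposition3:
  fixes C :: "'a set" and C' :: "'b set"
    and F :: "nat \<Rightarrow> 'a set" and F' :: "nat \<Rightarrow> 'b set"
    and m n :: nat
  assumes "m > 0" and "n > 0"
    and "finite C" and "card C = n"
    and "finite C'" and "card C' = n"
    and "\<forall>i\<in>{1..m}. F i \<subseteq> C"
    and "\<forall>i\<in>{1..m}. F' i \<subseteq> C'"
    and "\<forall>I. I \<subseteq> {1..m} \<and> I \<noteq> {} \<longrightarrow>
           card (\<Inter>i\<in>I. F i) = card (\<Inter>i\<in>I. F' i)"
  shows "biclique_chrom_poly C m F = biclique_chrom_poly C' m F'"
proof -
  let ?P = "membership {1..m} F" and ?P' = "membership {1..m} F'"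
  have "card {x\<in>C. T \<subseteq> ?P x} = card {x\<in>C'. T \<subseteq> ?P' x}" if "T \<subseteq> {1..m}" for T
    using that assms(4,6-9)
    by (cases "T = {}") (simp_all add: membership_supset_eq_Inter)
  then have fibres: "card {x\<in>C. ?P x = S} = card {x\<in>C'. ?P' x = S}" for S
    using assms(3,5)
    by (intro card_fibres_eq_if_card_supsets_eq[where K = "{1..m}"]) (auto simp: membership_def)
  obtain h where "bij_betw h C C'" and "\<forall>x\<in>C. ?P' (h x) = ?P x"
    using bij_betw_preserving_if_card_fibres_eq[OF assms(3,5) fibres] .
  then show ?thesis
    using assms(3)
    by (intro biclique_chrom_poly_eq_if_bij) (auto simp: membership_def set_eq_iff)
qed

end
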